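(* Let $\sigma$ be the morphism on the four-letter alphabet $\{1,1^*,2,2^*\}$ given by $1\to 2$, $1^*\to 2^*$, $2\to 1^*2^*$, $2^*\to 21$. Then $\sigma^3(2^* )$ begins with $2^*$, and the infinite sequence $\mathbf u=\lim_{n\to\infty}\sigma^{3n}(2^* )$ is not $q$-automatic for any $q\ge 2$. More precisely, $\mathbf u$ is a concatenation of the blocks $A=2^*2$ and $B=11^*$, and the resulting sequence over $\{A,B\}$ is the fixed point of the morphism $A\to ABABA$, $B\to ABA$, which is a Sturmian sequence.
   Context: A Sturmian sequence is an infinite sequence over a two-letter alphabet having exactly $n+1$ distinct factors of length $n$ for every $n\ge0$. For an integer $q\ge 2$, a sequence is $q$-automatic if it is the image under a letter-to-letter map of a fixed point of a morphism all of whose letter-images have length $q$. *)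

theory Defs
  imports Main
begin

datatype letter = L1 | L1s | L2 | L2s

fun sigma :: "letter \<Rightarrow> letter list" where
  "sigma L1 = [L2]"
| "sigma L1s = [L2s]"
| "sigma L2 = [L1s, L2s]"
| "sigma L2s = [L2, L1]"

definition sigma_w :: "letter list \<Rightarrow> letter list" where
  "sigma_w w = concat (map sigma w)"

datatype AB = A | B

fun block :: "AB \<Rightarrow> letter list" where
  "block A = [L2s, L2]"
| "block B = [L1, L1s]"

fun tau :: "AB \<Rightarrow> AB list" where
  "tau A = [A, B, A, B, A]"
| "tau B = [A, B, A]"

definition tau_w :: "AB list \<Rightarrow> AB list" where
  "tau_w w = concat (map tau w)"

definition word_limit :: "(nat \<Rightarrow> 'a) \<Rightarrow> (nat \<Rightarrow> 'a list) \<Rightarrow> bool" where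
  "word_limit x ws \<longleftrightarrow>
     (\<forall>N. \<exists>n0. \<forall>n\<ge>n0. N \<le> length (ws n) \<and> (\<forall>i<N. ws n ! i = x i))"

text \<open>q-automatic: x is the image under a letter-to-letter map c of a fixed point y of a
  q-uniform morphism h on a finite alphabet S (letters coded as natural numbers;
  h(y) = y means y (q*i+j) is the j-th letter of h(y i)).\<close>
definition q_automatic :: "nat \<Rightarrow> (nat \<Rightarrow> 'b) \<Rightarrow> bool" where
  "q_automatic q x \<longleftrightarrow>
     (\<exists>(S::nat set) (h::nat \<Rightarrow> nat list) (y::nat \<Rightarrow> nat) (c::nat \<Rightarrow> 'b).
        finite S
      \<and> (\<forall>a\<in>S. length (h a) = q \<and> set (h a) \<subseteq> S)
      \<and> (\<forall>i. y i \<in> S)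
      \<and> (\<forall>i j. j < q \<longrightarrow> y (q * i + j) = h (y i) ! j)
      \<and> (\<forall>i. x i = c (y i)))"

definition factors :: "(nat \<Rightarrow> 'a) \<Rightarrow> nat \<Rightarrow> 'a list set" where
  "factors x n = {map x [i..<i+n] | i. True}"

definition sturmian :: "(nat \<Rightarrow> AB) \<Rightarrow> bool" where
  "sturmian x \<longleftrightarrow> (\<forall>n. card (factors x n) = n + 1)"

end

theory Submission
  imports Defs "HOL-Analysis.Kronecker_Approximation_Theorem"
begin

text \<open>The cube of sigma maps the blocks A = 2* 2 and B = 1 1* to the block images of tau A and
  tau B, and sigma^3 (2*) = A B 2*, so sigma^(3n) (2*) is the block image of a prefix of the fixed
  point v of tau, followed by 2*.

  The word v is the mechanical word of slope alpha = (3 - sqrt 5) / 2 and intercept 1/2. Because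
  alpha^2 = 3 alpha - 1, the intercept at the position where tau of the n-th letter of v starts is
  an affine function of the intercept at n, which pins down the next three or five letters.
  Mechanical words of irrational slope are Sturmian: a factor of length n is determined by which of
  n cut points lie below its intercept, and by Kronecker's theorem every such configuration occurs.

  Every factor of length m of u contains m alpha / 2 letters 1 up to an error of at most 2. In a
  q-automatic word such a balanced frequency is rational: the letter counts in the blocks of length
  q^k of the underlying fixed point obey the recursion given by the q-uniform morphism, their
  differences are bounded, hence eventually periodic in k, and along a period the counts satisfy an
  affine recurrence. Since alpha is irrational, u is not q-automatic.\<close>

section \<open>Balanced frequencies in automatic sequences\<close>

fun count_window :: "(nat \<Rightarrow> bool) \<Rightarrow> nat \<Rightarrow> nat \<Rightarrow> int" where
  "count_window z s 0 = 0"
| "count_window z s (Suc m) = count_window z s m + (if z (s + m) then 1 else 0)"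

lemma count_window_add:
  "count_window z s (m + n) = count_window z s m + count_window z (s + m) n"
  by (induction n) (simp_all add: add.assoc)

lemma count_window_cong:
  "(\<And>j. j < m \<Longrightarrow> z (s + j) = z' (s' + j)) \<Longrightarrow> count_window z s m = count_window z' s' m"
  by (induction m) auto

lemma count_window_blocks:
  "count_window z s (t * m) = (\<Sum>r<t. count_window z (s + r * m) m)"
proof (induction t)
  case (Suc t)
  have "count_window z s (Suc t * m) = count_window z s (t * m + m)"
    by (simp add: add.commute)
  then show ?case
    using Suc by (simp add: count_window_add)
qed simp

lemma uniform_fixpoint_block:
  assumes "0 < q" and fixpoint: "\<And>i j. j < q \<Longrightarrow> y (q * i + j) = h (y i) ! j"
    and "y i = y i'" and "j < q ^ k"
  shows "y (q ^ k * i + j) = y (q ^ k * i' + j)"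
  using \<open>j < q ^ k\<close>
proof (induction k arbitrary: j)
  case 0
  then show ?case using \<open>y i = y i'\<close> by simp
next
  case (Suc k)
  have "j div q < q ^ k"
    using Suc.prems \<open>0 < q\<close> by (simp add: div_less_iff_less_mult mult.commute)
  moreover have "q ^ Suc k * i'' + j = q * (q ^ k * i'' + j div q) + j mod q" for i''
    by (simp add: algebra_simps)
  ultimately show ?case
    using fixpoint[of "j mod q"] Suc.IH \<open>0 < q\<close> by simp
qed

lemma deterministic_shift:
  assumes "\<And>k k'. f k = f k' \<Longrightarrow> f (Suc k) = f (Suc k')" and "f k = f k'"
  shows "f (k + j) = f (k' + j)"
proof (induction j)
  case (Suc j)
  then show ?case using assms(1)[of "k + j" "k' + j"] by simp
qed (use assms(2) in simp)

lemma finite_range_eventually_periodic: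
  fixes f :: "nat \<Rightarrow> 'a"
  assumes "finite (range f)" and det: "\<And>k k'. f k = f k' \<Longrightarrow> f (Suc k) = f (Suc k')"
  obtains k0 p where "0 < p" "\<And>m. f (k0 + m * p) = f k0"
proof -
  have "\<not> inj f"
    using assms(1) finite_imageD infinite_UNIV_nat by blast
  then obtain k0 k1 where "k0 < k1" "f k1 = f k0"
    unfolding inj_def by (metis linorder_neqE_nat)
  define p where "p = k1 - k0"
  have "f (k0 + m * p) = f k0" for m
  proof (induction m)
    case (Suc m)
    have "k0 + Suc m * p = (k0 + p) + m * p"
      by simp
    then have "f (k0 + Suc m * p) = f (k1 + m * p)"
      using \<open>k0 < k1\<close> by (simp add: p_def)
    also have "\<dots> = f (k0 + m * p)"
      using deterministic_shift[OF det \<open>f k1 = f k0\<close>] .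
    finally show ?case using Suc.IH by simp
  qed simp
  moreover have "0 < p"
    using \<open>k0 < k1\<close> by (simp add: p_def)
  ultimately show thesis
    using that by blast
qed

lemma power_mult_bounded_eq_0:
  fixes x d C :: real
  assumes "1 < x" and bounded: "\<And>m. \<bar>x ^ m * d\<bar> \<le> C"
  shows "d = 0"
proof (rule ccontr)
  assume "d \<noteq> 0"
  obtain m where "C / \<bar>d\<bar> < x ^ m"
    using real_arch_pow[OF \<open>1 < x\<close>] by blast
  then have "C < \<bar>x ^ m * d\<bar>"
    using \<open>d \<noteq> 0\<close> \<open>1 < x\<close> by (simp add: abs_mult pos_divide_less_eq)
  then show False
    using bounded[of m] by simp
qed

lemma affine_recurrence_rational:
  fixes Z :: "nat \<Rightarrow> int" and Q E :: int and x K :: real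
  assumes "2 \<le> Q" and recurrence: "\<And>m. Z (Suc m) = Q * Z m + E"
    and bound: "\<And>m. \<bar>of_int (Z m) - of_int Q ^ m * x\<bar> \<le> K"
  shows "x \<in> \<rat>"
proof -
  have geometric: "(Q - 1) * Z m + E = Q ^ m * ((Q - 1) * Z 0 + E)" for m
  proof (induction m)
    case (Suc m)
    have "(Q - 1) * Z (Suc m) + E = Q * ((Q - 1) * Z m + E)"
      by (simp add: recurrence algebra_simps)
    then show ?case
      using Suc.IH by simp
  qed simp
  define d where "d = of_int ((Q - 1) * Z 0 + E) - of_int (Q - 1) * x"
  have "\<bar>of_int Q ^ m * d\<bar> \<le> of_int (Q - 1) * K + \<bar>of_int E\<bar>" for m
  proof -
    have "of_int Q ^ m * d = of_int (Q - 1) * (of_int (Z m) - of_int Q ^ m * x) + of_int E"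
      using arg_cong[OF geometric[of m], of real_of_int] unfolding d_def by (simp add: algebra_simps)
    moreover have "\<bar>of_int (Q - 1) * (of_int (Z m) - of_int Q ^ m * x)\<bar> \<le> of_int (Q - 1) * K"
      using bound[of m] \<open>2 \<le> Q\<close> by (simp add: abs_mult mult_left_mono)
    ultimately show ?thesis
      by (smt (verit) abs_triangle_ineq)
  qed
  then have "d = 0"
    using \<open>2 \<le> Q\<close> by (intro power_mult_bounded_eq_0[of "of_int Q"]) auto
  then have "x = of_int ((Q - 1) * Z 0 + E) / of_int (Q - 1)"
    using \<open>2 \<le> Q\<close> unfolding d_def by (simp add: field_simps)
  then show ?thesis
    by (simp add: Rats_divide)
qed

lemma finite_range_restrict_diff:
  fixes N :: "nat \<Rightarrow> 'a \<Rightarrow> int" and c :: "nat \<Rightarrow> real"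
  assumes "finite R" "a0 \<in> R" and close: "\<And>k a. a \<in> R \<Longrightarrow> \<bar>of_int (N k a) - c k\<bar> \<le> K"
  shows "finite (range (\<lambda>k. restrict (\<lambda>a. N k a - N k a0) R))"
proof (rule finite_subset)
  define b where "b = \<lceil>2 * K\<rceil>"
  show "range (\<lambda>k. restrict (\<lambda>a. N k a - N k a0) R) \<subseteq> PiE R (\<lambda>_. {-b..b})"
  proof clarify
    fix k
    have "\<bar>N k a - N k a0\<bar> \<le> b" if "a \<in> R" for a
    proof -
      have "\<bar>of_int (N k a) - of_int (N k a0)\<bar> \<le> 2 * K"
        using close[OF that, of k] close[OF \<open>a0 \<in> R\<close>, of k] by linarith
      also have "\<dots> \<le> of_int b"
        unfolding b_def by (rule le_of_int_ceiling)
      finally show ?thesis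
        by (metis of_int_abs of_int_diff of_int_le_iff)
    qed
    then show "restrict (\<lambda>a. N k a - N k a0) R \<in> PiE R (\<lambda>_. {-b..b})"
      by (force simp: PiE_iff abs_le_iff)
  qed
  show "finite (PiE R (\<lambda>_. {-b..b}))"
    using \<open>finite R\<close> by (intro finite_PiE) auto
qed

lemma balanced_counts_rational:
  fixes N :: "nat \<Rightarrow> 'a \<Rightarrow> int" and h :: "'a \<Rightarrow> 'a list" and \<gamma> K :: real
  assumes "finite R" "a0 \<in> R" "2 \<le> q"
    and closed: "\<And>a r. a \<in> R \<Longrightarrow> r < q \<Longrightarrow> h a ! r \<in> R"
    and recursion: "\<And>k a. a \<in> R \<Longrightarrow> N (Suc k) a = (\<Sum>r<q. N k (h a ! r))"
    and balanced: "\<And>k a. a \<in> R \<Longrightarrow> \<bar>of_int (N k a) - real q ^ k * \<gamma>\<bar> \<le> K"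
  shows "\<gamma> \<in> \<rat>"
proof -
  txt \<open>The profiles D k take finitely many values and D (Suc k) depends only on D k, so they
    are eventually periodic; along a period the counts at a0 obey an affine recurrence.\<close>
  define D where "D k = restrict (\<lambda>a. N k a - N k a0) R" for k
  have N_Suc: "N (Suc k) a = int q * N k a0 + (\<Sum>r<q. D k (h a ! r))" if "a \<in> R" for k a
  proof -
    have "N (Suc k) a = (\<Sum>r<q. N k a0 + D k (h a ! r))"
      using recursion[OF that] closed[OF that] by (auto simp: D_def intro!: sum.cong)
    then show ?thesis
      by (simp add: sum.distrib)
  qed
  have D_det: "D (Suc k) = D (Suc k')" if "D k = D k'" for k k'
    unfolding D_def by (intro restrict_ext) (simp add: N_Suc \<open>a0 \<in> R\<close> that)
  have N_shift: "N (k + j) a0 - int q ^ j * N k a0 = N (k' + j) a0 - int q ^ j * N k' a0"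
    if "D k = D k'" for k k' j
  proof (induction j)
    case (Suc j)
    have "N (k'' + Suc j) a0 - int q ^ Suc j * N k'' a0
        = int q * (N (k'' + j) a0 - int q ^ j * N k'' a0) + (\<Sum>r<q. D (k'' + j) (h a0 ! r))" for k''
      using N_Suc[OF \<open>a0 \<in> R\<close>, of "k'' + j"] by (simp add: algebra_simps)
    then show ?case
      using Suc.IH deterministic_shift[OF D_det that, of j] by simp
  qed simp
  have "finite (range D)"
    unfolding D_def using \<open>finite R\<close> \<open>a0 \<in> R\<close> balanced by (rule finite_range_restrict_diff)
  then obtain k0 p where "0 < p" and periodic: "\<And>m. D (k0 + m * p) = D k0"
    using finite_range_eventually_periodic[of D] D_det by metis
  define Z where "Z m = N (k0 + m * p) a0" for m
  have "Z (Suc m) = int q ^ p * Z m + (N (k0 + p) a0 - int q ^ p * N k0 a0)" for m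
    using N_shift[OF periodic[of m], of p] by (simp add: Z_def algebra_simps)
  moreover have "\<bar>of_int (Z m) - of_int (int q ^ p) ^ m * (real q ^ k0 * \<gamma>)\<bar> \<le> K" for m
    using balanced[OF \<open>a0 \<in> R\<close>, of "k0 + m * p"]
    by (simp add: Z_def power_add mult.commute[of m p] power_mult mult.assoc mult.left_commute)
  moreover have "2 \<le> int q ^ p"
  proof -
    have "2 \<le> q ^ p"
      using \<open>2 \<le> q\<close> \<open>0 < p\<close> self_le_power[of q p] by simp
    then show ?thesis
      by (metis of_nat_le_iff of_nat_numeral of_nat_power)
  qed
  ultimately have "real q ^ k0 * \<gamma> \<in> \<rat>"
    by (intro affine_recurrence_rational[of "int q ^ p" Z]) auto
  moreover have "\<gamma> = real q ^ k0 * \<gamma> / real q ^ k0"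
    using \<open>2 \<le> q\<close> by simp
  ultimately show ?thesis
    by (metis Rats_divide Rats_of_nat of_nat_power)
qed

lemma q_automatic_balanced_frequency_rational:
  fixes x :: "nat \<Rightarrow> 'b" and \<gamma> K :: real
  assumes "2 \<le> q" "q_automatic q x"
    and balanced: "\<And>s m. \<bar>of_int (count_window (\<lambda>i. P (x i)) s m) - real m * \<gamma>\<bar> \<le> K"
  shows "\<gamma> \<in> \<rat>"
proof -
  obtain S h y and c :: "nat \<Rightarrow> 'b" where "finite S" and "\<forall>i. y i \<in> S"
    and fixpoint: "\<And>i j. j < q \<Longrightarrow> y (q * i + j) = h (y i) ! j" and "\<forall>i. x i = c (y i)"
    using \<open>q_automatic q x\<close> unfolding q_automatic_def by blast
  define z where "z = (\<lambda>i. P (x i))"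
  have block_count: "count_window z (q ^ k * i) (q ^ k) = count_window z (q ^ k * i') (q ^ k)"
    if "y i = y i'" for k i i'
    using uniform_fixpoint_block[OF _ fixpoint that] \<open>2 \<le> q\<close> \<open>\<forall>i. x i = c (y i)\<close>
    by (intro count_window_cong) (simp add: z_def)
  define N where "N k a = count_window z (q ^ k * (SOME i. y i = a)) (q ^ k)" for k a
  have N_y: "N k (y i) = count_window z (q ^ k * i) (q ^ k)" for k i
    unfolding N_def by (rule block_count) (rule someI_ex[of "\<lambda>i'. y i' = y i"], blast)
  show ?thesis
  proof (rule balanced_counts_rational[of "range y" "y 0" q h N \<gamma> K])
    show "finite (range y)"
      using \<open>finite S\<close> \<open>\<forall>i. y i \<in> S\<close> by (meson finite_subset image_subsetI)
    show "h a ! r \<in> range y" if "a \<in> range y" "r < q" for a r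
      using that fixpoint by (metis imageE rangeI)
    show "N (Suc k) a = (\<Sum>r<q. N k (h a ! r))" if a: "a \<in> range y" for k a
    proof -
      obtain i where "a = y i"
        using a by blast
      have "N (Suc k) a = count_window z (q ^ Suc k * i) (q * q ^ k)"
        by (simp add: \<open>a = y i\<close> N_y)
      also have "\<dots> = (\<Sum>r<q. count_window z (q ^ k * (q * i + r)) (q ^ k))"
        by (simp add: count_window_blocks algebra_simps)
      also have "\<dots> = (\<Sum>r<q. N k (h a ! r))"
      proof (rule sum.cong)
        fix r
        assume "r \<in> {..<q}"
        then have "h a ! r = y (q * i + r)"
          using fixpoint[of r i] \<open>a = y i\<close> by simp
        then show "count_window z (q ^ k * (q * i + r)) (q ^ k) = N k (h a ! r)"
          using N_y[of k "q * i + r"] by simp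
      qed simp
      finally show ?thesis .
    qed
    show "\<bar>of_int (N k a) - real q ^ k * \<gamma>\<bar> \<le> K" if a: "a \<in> range y" for k a
    proof -
      obtain i where "a = y i"
        using a by blast
      then show ?thesis
        using balanced[of "q ^ k * i" "q ^ k"] N_y[of k i] unfolding z_def by simp
    qed
  qed (use \<open>2 \<le> q\<close> in simp_all)
qed

section \<open>Mechanical words\<close>

definition mechanical :: "real \<Rightarrow> real \<Rightarrow> nat \<Rightarrow> AB" where
  "mechanical \<alpha> \<rho> k = (if \<lfloor>real (Suc k) * \<alpha> + \<rho>\<rfloor> = \<lfloor>real k * \<alpha> + \<rho>\<rfloor> + 1 then B else A)"

lemma floor_add_step:
  fixes x \<alpha> :: real
  assumes "0 \<le> \<alpha>" "\<alpha> < 1"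
  shows "\<lfloor>x + \<alpha>\<rfloor> = \<lfloor>x\<rfloor> \<or> \<lfloor>x + \<alpha>\<rfloor> = \<lfloor>x\<rfloor> + 1"
proof -
  have "\<lfloor>x\<rfloor> \<le> \<lfloor>x + \<alpha>\<rfloor>"
    using assms by (intro floor_mono) simp
  moreover have "x < of_int \<lfloor>x\<rfloor> + 1"
    by linarith
  then have "x + \<alpha> < of_int \<lfloor>x\<rfloor> + 2"
    using assms by linarith
  then have "\<lfloor>x + \<alpha>\<rfloor> < \<lfloor>x\<rfloor> + 2"
    by (simp add: floor_less_iff)
  ultimately show ?thesis
    by linarith
qed

lemma floor_mult_Suc_step:
  fixes \<alpha> t :: real
  assumes "0 \<le> \<alpha>" "\<alpha> < 1"
  shows "\<lfloor>real (Suc j) * \<alpha> + t\<rfloor> = \<lfloor>real j * \<alpha> + t\<rfloor>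
    \<or> \<lfloor>real (Suc j) * \<alpha> + t\<rfloor> = \<lfloor>real j * \<alpha> + t\<rfloor> + 1"
proof -
  have "real (Suc j) * \<alpha> + t = (real j * \<alpha> + t) + \<alpha>"
    by (simp add: algebra_simps)
  then show ?thesis
    using floor_add_step[OF assms, of "real j * \<alpha> + t"] by (simp only:)
qed

lemma floor_add_unit_interval:
  fixes x \<theta> :: real
  assumes "0 \<le> \<theta>" "\<theta> < 1"
  shows "\<lfloor>x + \<theta>\<rfloor> = \<lfloor>x\<rfloor> + (if 1 - frac x \<le> \<theta> then 1 else 0)"
proof -
  have "x + \<theta> = (frac x + \<theta>) + of_int \<lfloor>x\<rfloor>"
    by (simp add: frac_def)
  then have "\<lfloor>x + \<theta>\<rfloor> = \<lfloor>frac x + \<theta>\<rfloor> + \<lfloor>x\<rfloor>"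
    by (simp only: floor_add_int)
  moreover have "\<lfloor>frac x + \<theta>\<rfloor> = (if 1 - frac x \<le> \<theta> then 1 else 0)"
    using assms frac_lt_1[of x] frac_ge_0[of x] by (simp add: floor_eq_iff)
  ultimately show ?thesis
    by simp
qed

lemma mechanical_shift:
  "mechanical \<alpha> \<rho> (i + j) = mechanical \<alpha> (frac (real i * \<alpha> + \<rho>)) j"
proof -
  have "\<lfloor>real (i + k) * \<alpha> + \<rho>\<rfloor> = \<lfloor>real k * \<alpha> + frac (real i * \<alpha> + \<rho>)\<rfloor> + \<lfloor>real i * \<alpha> + \<rho>\<rfloor>"
    for k
  proof -
    have "real (i + k) * \<alpha> + \<rho> = (real k * \<alpha> + frac (real i * \<alpha> + \<rho>)) + of_int \<lfloor>real i * \<alpha> + \<rho>\<rfloor>"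
      by (simp add: frac_def algebra_simps)
    then show ?thesis
      by simp
  qed
  from this[of j] this[of "Suc j"] show ?thesis
    unfolding mechanical_def by simp
qed

lemma mechanical_0:
  assumes "0 \<le> \<alpha>" "\<alpha> < 1" "0 \<le> \<rho>" "\<rho> < 1"
  shows "mechanical \<alpha> \<rho> 0 = (if 1 - \<alpha> \<le> \<rho> then B else A)"
proof -
  have "\<lfloor>\<rho>\<rfloor> = 0"
    using assms by (simp add: floor_eq_iff)
  moreover have "\<lfloor>\<alpha> + \<rho>\<rfloor> = 1 \<longleftrightarrow> 1 - \<alpha> \<le> \<rho>"
    using assms by (auto simp: floor_eq_iff)
  ultimately show ?thesis
    by (simp add: mechanical_def)
qed

lemma count_window_mechanical:
  assumes "0 \<le> \<alpha>" "\<alpha> < 1"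
  shows "count_window (\<lambda>k. mechanical \<alpha> \<rho> k = B) s m = \<lfloor>real (s + m) * \<alpha> + \<rho>\<rfloor> - \<lfloor>real s * \<alpha> + \<rho>\<rfloor>"
proof (induction m)
  case (Suc m)
  note floor_mult_Suc_step[OF assms, of "s + m" \<rho>]
  then show ?case
    using Suc.IH by (auto simp: mechanical_def simp del: of_nat_Suc of_nat_add)
qed simp

definition cut_points :: "real \<Rightarrow> nat \<Rightarrow> real set" where
  "cut_points \<alpha> n = (\<lambda>j. 1 - frac (real j * \<alpha>)) ` {1..n}"

lemma mechanical_prefix_eq_iff_floors:
  assumes "0 \<le> \<alpha>" "\<alpha> < 1" "0 \<le> \<theta>" "\<theta> < 1" "0 \<le> \<theta>'" "\<theta>' < 1"
  shows "map (mechanical \<alpha> \<theta>) [0..<n] = map (mechanical \<alpha> \<theta>') [0..<n]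
    \<longleftrightarrow> (\<forall>j\<le>n. \<lfloor>real j * \<alpha> + \<theta>\<rfloor> = \<lfloor>real j * \<alpha> + \<theta>'\<rfloor>)"
proof
  assume prefix: "map (mechanical \<alpha> \<theta>) [0..<n] = map (mechanical \<alpha> \<theta>') [0..<n]"
  show "\<forall>j\<le>n. \<lfloor>real j * \<alpha> + \<theta>\<rfloor> = \<lfloor>real j * \<alpha> + \<theta>'\<rfloor>"
  proof (intro allI impI)
    fix j
    assume "j \<le> n"
    then show "\<lfloor>real j * \<alpha> + \<theta>\<rfloor> = \<lfloor>real j * \<alpha> + \<theta>'\<rfloor>"
    proof (induction j)
      case 0
      have "\<lfloor>\<theta>\<rfloor> = 0" "\<lfloor>\<theta>'\<rfloor> = 0"
        using assms by (simp_all add: floor_eq_iff)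
      then show ?case
        by simp
    next
      case (Suc j)
      have "mechanical \<alpha> \<theta> j = mechanical \<alpha> \<theta>' j"
        using arg_cong[OF prefix, of "\<lambda>xs. xs ! j"] Suc.prems by simp
      moreover note floor_mult_Suc_step[OF assms(1,2), of j \<theta>] floor_mult_Suc_step[OF assms(1,2), of j \<theta>']
      ultimately show ?case
        using Suc by (auto simp: mechanical_def split: if_splits simp del: of_nat_Suc)
    qed
  qed
next
  assume floors: "\<forall>j\<le>n. \<lfloor>real j * \<alpha> + \<theta>\<rfloor> = \<lfloor>real j * \<alpha> + \<theta>'\<rfloor>"
  show "map (mechanical \<alpha> \<theta>) [0..<n] = map (mechanical \<alpha> \<theta>') [0..<n]"
  proof (intro map_cong refl)
    fix k
    assume "k \<in> set [0..<n]"
    then show "mechanical \<alpha> \<theta> k = mechanical \<alpha> \<theta>' k"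
      using floors by (simp add: mechanical_def del: of_nat_Suc)
  qed
qed

lemma mechanical_prefix_eq_iff:
  assumes "0 \<le> \<alpha>" "\<alpha> < 1" "0 \<le> \<theta>" "\<theta> < 1" "0 \<le> \<theta>'" "\<theta>' < 1"
  shows "map (mechanical \<alpha> \<theta>) [0..<n] = map (mechanical \<alpha> \<theta>') [0..<n]
    \<longleftrightarrow> {c \<in> cut_points \<alpha> n. c \<le> \<theta>} = {c \<in> cut_points \<alpha> n. c \<le> \<theta>'}"
proof -
  let ?c = "\<lambda>j. 1 - frac (real j * \<alpha>)"
  have floor_iff: "\<lfloor>real j * \<alpha> + \<theta>\<rfloor> = \<lfloor>real j * \<alpha> + \<theta>'\<rfloor> \<longleftrightarrow> (?c j \<le> \<theta> \<longleftrightarrow> ?c j \<le> \<theta>')" for j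
    using floor_add_unit_interval[OF assms(3,4), of "real j * \<alpha>"]
      floor_add_unit_interval[OF assms(5,6), of "real j * \<alpha>"] by auto
  have "(\<forall>j\<le>n. \<lfloor>real j * \<alpha> + \<theta>\<rfloor> = \<lfloor>real j * \<alpha> + \<theta>'\<rfloor>) \<longleftrightarrow> (\<forall>j\<le>n. ?c j \<le> \<theta> \<longleftrightarrow> ?c j \<le> \<theta>')"
    by (simp only: floor_iff)
  also have "\<dots> \<longleftrightarrow> (\<forall>j\<in>{1..n}. ?c j \<le> \<theta> \<longleftrightarrow> ?c j \<le> \<theta>')"
  proof -
    have "\<not> ?c 0 \<le> \<theta>" "\<not> ?c 0 \<le> \<theta>'"
      using assms by simp_all
    then show ?thesis
      by (metis atLeastAtMost_iff not_one_le_zero less_one linorder_not_less)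
  qed
  also have "\<dots> \<longleftrightarrow> {c \<in> cut_points \<alpha> n. c \<le> \<theta>} = {c \<in> cut_points \<alpha> n. c \<le> \<theta>'}"
    unfolding cut_points_def set_eq_iff by auto
  finally show ?thesis
    using mechanical_prefix_eq_iff_floors[OF assms] by simp
qed

lemma irrational_times_int_not_int:
  fixes \<alpha> :: real
  assumes "\<alpha> \<notin> \<rat>" "of_int m * \<alpha> \<in> \<int>"
  shows "m = 0"
proof (rule ccontr)
  assume "m \<noteq> 0"
  obtain z where "of_int m * \<alpha> = of_int z"
    using assms(2) by (elim Ints_cases)
  then have "\<alpha> = of_int z / of_int m"
    using \<open>m \<noteq> 0\<close> by (simp add: field_simps)
  then show False
    using assms(1) by simp
qed

lemma cut_points_card:
  assumes "\<alpha> \<notin> \<rat>"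
  shows "card (cut_points \<alpha> n) = n"
proof -
  have "inj_on (\<lambda>j. 1 - frac (real j * \<alpha>)) {1..n}"
  proof (rule inj_onI)
    fix j j'
    assume "1 - frac (real j * \<alpha>) = 1 - frac (real j' * \<alpha>)"
    then have "of_int (int j - int j') * \<alpha> = of_int (\<lfloor>real j * \<alpha>\<rfloor> - \<lfloor>real j' * \<alpha>\<rfloor>)"
      by (simp add: frac_def algebra_simps)
    then have "of_int (int j - int j') * \<alpha> \<in> \<int>"
      by simp
    then show "j = j'"
      using irrational_times_int_not_int[OF assms] by fastforce
  qed
  then show ?thesis
    by (simp add: cut_points_def card_image)
qed

lemma cut_points_subset:
  assumes "\<alpha> \<notin> \<rat>"
  shows "cut_points \<alpha> n \<subseteq> {0<..<1}"
proof
  fix c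
  assume "c \<in> cut_points \<alpha> n"
  then obtain j where "1 \<le> j" "c = 1 - frac (real j * \<alpha>)"
    unfolding cut_points_def by auto
  moreover have "real j * \<alpha> \<notin> \<int>"
    using irrational_times_int_not_int[OF assms, of "int j"] \<open>1 \<le> j\<close> by auto
  ultimately show "c \<in> {0<..<1}"
    using frac_lt_1[of "real j * \<alpha>"] by simp
qed

lemma card_lower_sets_le:
  fixes P X :: "real set"
  assumes "finite P"
  shows "card ((\<lambda>\<theta>. {c \<in> P. c \<le> \<theta>}) ` X) \<le> card P + 1"
proof -
  let ?cut = "\<lambda>\<theta>. {c \<in> P. c \<le> \<theta>}"
  have "inj_on card (?cut ` X)"
  proof (rule inj_onI)
    fix Y Y'
    assume "Y \<in> ?cut ` X" "Y' \<in> ?cut ` X" and "card Y = card Y'"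
    then obtain \<theta> \<theta>' where "Y = ?cut \<theta>" "Y' = ?cut \<theta>'"
      by blast
    then have "Y \<subseteq> Y' \<or> Y' \<subseteq> Y"
      by (cases "\<theta> \<le> \<theta>'") auto
    moreover have "finite Y" "finite Y'"
      using \<open>Y = ?cut \<theta>\<close> \<open>Y' = ?cut \<theta>'\<close> \<open>finite P\<close> by simp_all
    ultimately show "Y = Y'"
      using \<open>card Y = card Y'\<close> card_subset_eq by metis
  qed
  then have "card (?cut ` X) = card (card ` ?cut ` X)"
    by (simp add: card_image)
  also have "\<dots> \<le> card {0..card P}"
    using \<open>finite P\<close> by (intro card_mono) (auto intro: card_mono)
  finally show ?thesis
    by simp
qed

lemma card_lower_sets:
  fixes P :: "real set"
  assumes "finite P" "P \<subseteq> {0<..<1}"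
  shows "card ((\<lambda>\<theta>. {c \<in> P. c \<le> \<theta>}) ` {0..<1}) = card P + 1"
proof (rule antisym)
  let ?cut = "\<lambda>\<theta>. {c \<in> P. c \<le> \<theta>}"
  show "card (?cut ` {0..<1}) \<le> card P + 1"
    using \<open>finite P\<close> by (rule card_lower_sets_le)
  have "insert 0 P \<subseteq> {0..<1}"
    using assms(2) by (simp add: subset_iff less_imp_le)
  have "Max (insert 0 (?cut \<theta>)) = \<theta>" if "\<theta> \<in> insert 0 P" for \<theta>
  proof (rule Max_eqI)
    show "finite (insert 0 (?cut \<theta>))"
      using \<open>finite P\<close> by simp
    show "c \<le> \<theta>" if "c \<in> insert 0 (?cut \<theta>)" for c
      using that \<open>\<theta> \<in> insert 0 P\<close> \<open>insert 0 P \<subseteq> {0..<1}\<close> by auto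
    show "\<theta> \<in> insert 0 (?cut \<theta>)"
      using \<open>\<theta> \<in> insert 0 P\<close> by auto
  qed
  then have "inj_on ?cut (insert 0 P)"
    by (rule inj_on_inverseI)
  moreover have "0 \<notin> P"
    using assms(2) by auto
  ultimately have "card P + 1 = card (?cut ` insert 0 P)"
    using \<open>finite P\<close> by (simp add: card_image)
  also have "\<dots> \<le> card (?cut ` {0..<1})"
  proof (rule card_mono)
    show "finite (?cut ` {0..<1})"
      by (rule finite_subset[of _ "Pow P"]) (use \<open>finite P\<close> in blast)+
    show "?cut ` insert 0 P \<subseteq> ?cut ` {0..<1}"
      using \<open>insert 0 P \<subseteq> {0..<1}\<close> by (rule image_mono)
  qed
  finally show "card P + 1 \<le> card (?cut ` {0..<1})" .
qed

lemma frac_orbit_meets_every_cut: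
  fixes \<alpha> \<rho> x :: real
  assumes "\<alpha> \<notin> \<rat>" "finite P" "0 \<le> x" "x < 1"
  shows "\<exists>i. {c \<in> P. c \<le> frac (real i * \<alpha> + \<rho>)} = {c \<in> P. c \<le> x}"
proof -
  define gaps where "gaps = insert (1 - x) {c - x | c. c \<in> P \<and> x < c}"
  define e where "e = Min gaps"
  have "finite gaps"
    using \<open>finite P\<close> unfolding gaps_def by simp
  have e_le: "e \<le> g" if "g \<in> gaps" for g
    using \<open>finite gaps\<close> that unfolding e_def by (rule Min_le)
  have "e \<in> gaps"
    using \<open>finite gaps\<close> unfolding e_def by (rule Min_in) (simp add: gaps_def)
  moreover have "0 < g" if "g \<in> gaps" for g
    using that \<open>x < 1\<close> unfolding gaps_def by auto
  ultimately have "0 < e"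
    by blast
  have "x + e \<le> 1"
    using e_le[of "1 - x"] unfolding gaps_def by simp
  have no_cut: "x + e \<le> c" if "c \<in> P" "x < c" for c
  proof -
    have "c - x \<in> gaps"
      unfolding gaps_def using that by blast
    then show ?thesis
      using e_le by fastforce
  qed
  have "0 < e / 2"
    using \<open>0 < e\<close> by simp
  then obtain h k where "0 < k" and close: "\<bar>of_int k * \<alpha> - of_int h - (x + e / 2 - \<rho>)\<bar> < e / 2"
    by (rule sequence_of_fractional_parts_is_dense[OF \<open>\<alpha> \<notin> \<rat>\<close>])
  define w where "w = of_int k * \<alpha> + \<rho> - of_int h"
  have "x < w"
    using close unfolding w_def abs_less_iff by linarith
  have "w < x + e"
    using close unfolding w_def abs_less_iff by linarith
  have "frac (real (nat k) * \<alpha> + \<rho>) = w"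
    using \<open>0 < k\<close> \<open>0 \<le> x\<close> \<open>x < w\<close> \<open>w < x + e\<close> \<open>x + e \<le> 1\<close>
    unfolding w_def by (simp add: frac_unique_iff)
  then have "{c \<in> P. c \<le> frac (real (nat k) * \<alpha> + \<rho>)} = {c \<in> P. c \<le> x}"
    using \<open>x < w\<close> \<open>w < x + e\<close> no_cut by fastforce
  then show ?thesis ..
qed

lemma lower_sets_frac_orbit:
  fixes \<alpha> \<rho> :: real
  assumes "\<alpha> \<notin> \<rat>" "finite P"
  shows "(\<lambda>\<theta>. {c \<in> P. c \<le> \<theta>}) ` range (\<lambda>i. frac (real i * \<alpha> + \<rho>)) = (\<lambda>\<theta>. {c \<in> P. c \<le> \<theta>}) ` {0..<1}"
proof
  let ?cut = "\<lambda>\<theta>. {c \<in> P. c \<le> \<theta>}"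
  show "?cut ` range (\<lambda>i. frac (real i * \<alpha> + \<rho>)) \<subseteq> ?cut ` {0..<1}"
    by (intro image_mono image_subsetI) (simp add: frac_lt_1)
  show "?cut ` {0..<1} \<subseteq> ?cut ` range (\<lambda>i. frac (real i * \<alpha> + \<rho>))"
  proof (rule image_subsetI)
    fix x :: real
    assume "x \<in> {0..<1}"
    then obtain i where same_cut: "?cut (frac (real i * \<alpha> + \<rho>)) = ?cut x"
      using frac_orbit_meets_every_cut[OF assms, of x \<rho>] by auto
    show "?cut x \<in> ?cut ` range (\<lambda>i. frac (real i * \<alpha> + \<rho>))"
      by (rule image_eqI[rotated, OF rangeI[of _ i]]) (simp only: same_cut)
  qed
qed

lemma map_upt_offset: "map f [a..<a + m] = map (\<lambda>j. f (a + j)) [0..<m]"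
  by (rule nth_equalityI) simp_all

lemma mechanical_factor:
  "map (mechanical \<alpha> \<rho>) [i..<i + n] = map (mechanical \<alpha> (frac (real i * \<alpha> + \<rho>))) [0..<n]"
  by (simp add: map_upt_offset mechanical_shift)

lemma card_image_cong:
  assumes "\<And>x y. x \<in> T \<Longrightarrow> y \<in> T \<Longrightarrow> f x = f y \<longleftrightarrow> g x = g y"
  shows "card (f ` T) = card (g ` T)"
proof -
  let ?\<phi> = "\<lambda>b. f (inv_into T g b)"
  have inv: "inv_into T g (g x) \<in> T" "g (inv_into T g (g x)) = g x" if "x \<in> T" for x
    using that by (simp_all add: inv_into_into f_inv_into_f)
  have "f ` T = ?\<phi> ` g ` T"
    unfolding image_image using inv assms by (intro image_cong) auto
  moreover have "inj_on ?\<phi> (g ` T)"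
    using inv assms by (intro inj_onI) auto
  ultimately show ?thesis
    by (simp add: card_image)
qed

theorem sturmian_mechanical:
  assumes "\<alpha> \<notin> \<rat>" "0 < \<alpha>" "\<alpha> < 1"
  shows "sturmian (mechanical \<alpha> \<rho>)"
  unfolding sturmian_def
proof
  fix n
  define T where "T = range (\<lambda>i. frac (real i * \<alpha> + \<rho>))"
  let ?cut = "\<lambda>\<theta>. {c \<in> cut_points \<alpha> n. c \<le> \<theta>}"
  have T_unit: "0 \<le> \<theta> \<and> \<theta> < 1" if \<theta>: "\<theta> \<in> T" for \<theta>
  proof -
    obtain i where "\<theta> = frac (real i * \<alpha> + \<rho>)"
      using \<theta> unfolding T_def by blast
    then show ?thesis
      by (simp add: frac_lt_1)
  qed
  have "factors (mechanical \<alpha> \<rho>) n = (\<lambda>\<theta>. map (mechanical \<alpha> \<theta>) [0..<n]) ` T"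
    unfolding factors_def mechanical_factor T_def image_image by blast
  also have "card \<dots> = card (?cut ` T)"
  proof (rule card_image_cong)
    fix \<theta> \<theta>'
    assume "\<theta> \<in> T" "\<theta>' \<in> T"
    then show "map (mechanical \<alpha> \<theta>) [0..<n] = map (mechanical \<alpha> \<theta>') [0..<n] \<longleftrightarrow> ?cut \<theta> = ?cut \<theta>'"
      using T_unit[of \<theta>] T_unit[of \<theta>'] assms(2,3)
      by (intro mechanical_prefix_eq_iff) simp_all
  qed
  also have "?cut ` T = ?cut ` {0..<1}"
    unfolding T_def using \<open>\<alpha> \<notin> \<rat>\<close> by (rule lower_sets_frac_orbit) (simp add: cut_points_def)
  also have "card \<dots> = n + 1"
  proof -
    have "finite (cut_points \<alpha> n)"
      by (simp add: cut_points_def)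
    then show ?thesis
      using card_lower_sets[OF _ cut_points_subset[OF assms(1)]] cut_points_card[OF assms(1)] by simp
  qed
  finally show "card (factors (mechanical \<alpha> \<rho>) n) = n + 1" .
qed

section \<open>The fixed point of tau\<close>

definition slope :: real where
  "slope = (3 - sqrt 5) / 2"

lemma slope_square: "slope * slope = 3 * slope - 1"
proof -
  have "sqrt 5 * sqrt 5 = (5::real)"
    by simp
  then show ?thesis
    unfolding slope_def by (simp add: field_simps)
qed

lemma slope_bounds: "19 / 50 < slope" "slope < 2 / 5"
proof -
  have "11 / 5 < sqrt (5::real)"
    by (rule real_less_rsqrt) (simp add: power2_eq_square)
  moreover have "sqrt (5::real) < sqrt ((56 / 25)\<^sup>2)"
    by (rule real_sqrt_less_mono) (simp add: power2_eq_square)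
  ultimately show "19 / 50 < slope" "slope < 2 / 5"
    unfolding slope_def by simp_all
qed

lemma slope_irrational: "slope \<notin> \<rat>"
proof
  assume "slope \<in> \<rat>"
  then obtain m n :: nat where "n \<noteq> 0" "\<bar>slope\<bar> = real m / real n" "coprime m n"
    by (rule Rats_abs_nat_div_natE)
  then have "slope = real m / real n"
    using slope_bounds by simp
  then have "(real m / real n) * (real m / real n) = 3 * (real m / real n) - 1"
    using slope_square by simp
  then have "real (m * m + n * n) = real (3 * m * n)"
    using \<open>n \<noteq> 0\<close> by (simp add: field_simps)
  then have "m * m + n * n = 3 * m * n"
    by (simp only: of_nat_eq_iff)
  then have "n dvd m * m"
    by (metis dvd_add_left_iff dvd_triv_left dvd_triv_right mult.assoc mult.commute)
  moreover have "coprime n (m * m)"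
    using \<open>coprime m n\<close> by (simp add: coprime_commute)
  ultimately have "n dvd 1"
    by (metis coprime_common_divisor dvd_refl)
  then have "n = 1"
    by simp
  then show False
    using \<open>slope = real m / real n\<close> slope_bounds by (cases m) auto
qed

definition v_seq :: "nat \<Rightarrow> AB" where
  "v_seq = mechanical slope (1 / 2)"

lemma frac_slope_orbit_pos: "0 < frac (real n * slope + 1 / 2)"
proof -
  have "real n * slope + 1 / 2 \<notin> \<int>"
  proof
    assume "real n * slope + 1 / 2 \<in> \<int>"
    then obtain z where z: "real n * slope + 1 / 2 = of_int z"
      by (elim Ints_cases)
    then have "of_int (2 * int n) * slope = of_int (2 * z - 1)"
      by (simp add: algebra_simps)
    then have "n = 0"
      using irrational_times_int_not_int[OF slope_irrational, of "2 * int n"] by simp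
    then have "2 * of_int z = (1::real)"
      using z by simp
    then have "2 * z = 1"
      by linarith
    then show False
      by presburger
  qed
  then show ?thesis
    by simp
qed

text \<open>The length of the image under tau of the prefix of length n of v_seq: each A contributes
  five letters, each B three, and the prefix contains floor (n slope + 1/2) letters B.\<close>
definition tau_position :: "nat \<Rightarrow> nat" where
  "tau_position n = nat (5 * int n - 2 * \<lfloor>real n * slope + 1 / 2\<rfloor>)"

lemma real_tau_position:
  "real (tau_position n) = 5 * real n - 2 * of_int \<lfloor>real n * slope + 1 / 2\<rfloor>"
proof -
  have "real n * slope \<le> real n"
    using slope_bounds by (simp add: mult_left_le)
  then have "\<lfloor>real n * slope + 1 / 2\<rfloor> \<le> int n"
    by (simp add: floor_le_iff)
  then show ?thesis
    unfolding tau_position_def by simp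
qed

lemma frac_tau_position:
  "frac (real (tau_position n) * slope + 1 / 2)
    = 1 - slope - (1 - 2 * slope) * frac (real n * slope + 1 / 2)"
proof -
  define F where "F = \<lfloor>real n * slope + 1 / 2\<rfloor>"
  define \<theta> where "\<theta> = frac (real n * slope + 1 / 2)"
  have \<theta>_eq: "\<theta> = real n * slope + 1 / 2 - of_int F"
    by (simp add: \<theta>_def F_def frac_def)
  have "real (tau_position n) * slope + 1 / 2 = (1 - slope - (1 - 2 * slope) * \<theta>) + of_int (2 * int n - F)"
  proof -
    have "real n * (slope * slope) = real n * (3 * slope - 1)"
      by (simp add: slope_square)
    then show ?thesis
      unfolding real_tau_position F_def[symmetric] \<theta>_eq by (simp add: algebra_simps)
  qed
  moreover have "0 \<le> 1 - slope - (1 - 2 * slope) * \<theta>" "1 - slope - (1 - 2 * slope) * \<theta> < 1"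
  proof -
    have "0 \<le> \<theta>" "\<theta> \<le> 1" "0 \<le> 1 - 2 * slope"
      using slope_bounds frac_lt_1[of "real n * slope + 1 / 2"] by (simp_all add: \<theta>_def)
    then have le: "(1 - 2 * slope) * \<theta> \<le> 1 - 2 * slope" and nonneg: "0 \<le> (1 - 2 * slope) * \<theta>"
      by (simp_all add: mult_left_le)
    show "0 \<le> 1 - slope - (1 - 2 * slope) * \<theta>"
      using le slope_bounds by linarith
    show "1 - slope - (1 - 2 * slope) * \<theta> < 1"
      using nonneg slope_bounds by linarith
  qed
  ultimately show ?thesis
    unfolding \<theta>_def[symmetric] frac_unique_iff by simp
qed

lemma mechanical_slope_prefix_B:
  assumes "slope < \<psi>" "\<psi> \<le> 2 - 4 * slope"
  shows "tau B = map (mechanical slope \<psi>) [0..<length (tau B)]"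
proof -
  have "\<lfloor>\<psi>\<rfloor> = 0" "\<lfloor>slope + \<psi>\<rfloor> = 0" "\<lfloor>2 * slope + \<psi>\<rfloor> = 1" "\<lfloor>3 * slope + \<psi>\<rfloor> = 1"
    using assms slope_bounds by (simp_all add: floor_eq_iff)
  then show ?thesis
    by (simp add: mechanical_def upt_rec)
qed

lemma mechanical_slope_prefix_A:
  assumes "2 - 4 * slope < \<psi>" "\<psi> < 1 - slope"
  shows "tau A = map (mechanical slope \<psi>) [0..<length (tau A)]"
proof -
  have "\<lfloor>\<psi>\<rfloor> = 0" "\<lfloor>slope + \<psi>\<rfloor> = 0" "\<lfloor>2 * slope + \<psi>\<rfloor> = 1" "\<lfloor>3 * slope + \<psi>\<rfloor> = 1"
    "\<lfloor>4 * slope + \<psi>\<rfloor> = 2" "\<lfloor>5 * slope + \<psi>\<rfloor> = 2"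
    using assms slope_bounds by (simp_all add: floor_eq_iff)
  then show ?thesis
    by (simp add: mechanical_def upt_rec)
qed

lemma tau_mechanical_slope:
  assumes "0 < \<theta>" "\<theta> < 1"
  shows "tau (mechanical slope \<theta> 0)
    = map (mechanical slope (1 - slope - (1 - 2 * slope) * \<theta>)) [0..<length (tau (mechanical slope \<theta> 0))]"
proof -
  define \<psi> where "\<psi> = 1 - slope - (1 - 2 * slope) * \<theta>"
  have "0 < 1 - 2 * slope"
    using slope_bounds by simp
  have pivot: "(1 - 2 * slope) * (1 - slope) = 3 * slope - 1"
    using slope_square by (simp add: algebra_simps)
  show ?thesis
  proof (cases "1 - slope \<le> \<theta>")
    case True
    have "(1 - 2 * slope) * \<theta> < 1 - 2 * slope"
      using \<open>0 < 1 - 2 * slope\<close> \<open>\<theta> < 1\<close> by simp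
    moreover have "(1 - 2 * slope) * (1 - slope) \<le> (1 - 2 * slope) * \<theta>"
      using \<open>0 < 1 - 2 * slope\<close> True by (simp add: mult_left_mono)
    ultimately have \<psi>_bounds: "slope < \<psi>" "\<psi> \<le> 2 - 4 * slope"
      unfolding \<psi>_def pivot by linarith+
    have "mechanical slope \<theta> 0 = B"
      using True assms slope_bounds by (simp add: mechanical_0)
    then show ?thesis
      unfolding \<psi>_def[symmetric] using mechanical_slope_prefix_B[OF \<psi>_bounds] by (simp only:)
  next
    case False
    have "0 < (1 - 2 * slope) * \<theta>"
      using \<open>0 < 1 - 2 * slope\<close> \<open>0 < \<theta>\<close> by simp
    moreover have "(1 - 2 * slope) * \<theta> < (1 - 2 * slope) * (1 - slope)"
      using \<open>0 < 1 - 2 * slope\<close> False by simp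
    ultimately have \<psi>_bounds: "2 - 4 * slope < \<psi>" "\<psi> < 1 - slope"
      unfolding \<psi>_def pivot by linarith+
    have "mechanical slope \<theta> 0 = A"
      using False assms slope_bounds by (simp add: mechanical_0)
    then show ?thesis
      unfolding \<psi>_def[symmetric] using mechanical_slope_prefix_A[OF \<psi>_bounds] by (simp only:)
  qed
qed

lemma tau_position_Suc: "tau_position (Suc n) = tau_position n + length (tau (v_seq n))"
proof -
  have "0 \<le> slope" "slope < 1"
    using slope_bounds by simp_all
  note step = floor_mult_Suc_step[OF this, of n "1 / 2"]
  have "\<lfloor>real (Suc n) * slope + 1 / 2\<rfloor> = \<lfloor>real n * slope + 1 / 2\<rfloor> + (if v_seq n = B then 1 else 0)"
    using step unfolding v_seq_def mechanical_def by auto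
  then have "real (tau_position (Suc n)) = real (tau_position n + length (tau (v_seq n)))"
    by (cases "v_seq n") (simp_all add: real_tau_position)
  then show ?thesis
    by (simp only: of_nat_eq_iff)
qed

lemma tau_v_seq: "tau (v_seq n) = map v_seq [tau_position n..<tau_position (Suc n)]"
proof -
  have "v_seq (i + j) = mechanical slope (frac (real i * slope + 1 / 2)) j" for i j
    unfolding v_seq_def by (rule mechanical_shift)
  from this[of n 0] this[of "tau_position n"] show ?thesis
    using tau_mechanical_slope[OF frac_slope_orbit_pos frac_lt_1, of n]
    by (simp add: tau_position_Suc map_upt_offset frac_tau_position)
qed

lemma tau_w_prefix_v_seq: "tau_w (map v_seq [0..<n]) = map v_seq [0..<tau_position n]"
proof (induction n)
  case 0
  then show ?case
    by (simp add: tau_w_def tau_position_def)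
next
  case (Suc n)
  have "tau_w (map v_seq [0..<Suc n]) = map v_seq [0..<tau_position n] @ tau (v_seq n)"
    using Suc.IH by (simp add: tau_w_def)
  also have "\<dots> = map v_seq [0..<tau_position (Suc n)]"
    unfolding tau_v_seq by (simp add: tau_position_Suc upt_add_eq_append[of 0] del: upt.simps)
  finally show ?case .
qed

lemma length_tau_w: "3 * length w \<le> length (tau_w w)"
proof (induction w)
  case (Cons a w)
  have "3 \<le> length (tau a)"
    by (cases a) simp_all
  then show ?case
    using Cons.IH by (simp add: tau_w_def)
qed (simp add: tau_w_def)

lemma v_seq_0: "v_seq 0 = A"
  using slope_bounds by (simp add: v_seq_def mechanical_0)

lemma tau_pow_prefix_v_seq: "\<exists>m>n. (tau_w ^^ n) [A] = map v_seq [0..<m]"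
proof (induction n)
  case 0
  show ?case
    by (rule exI[of _ 1]) (simp add: v_seq_0)
next
  case (Suc n)
  then obtain m where "n < m" and m: "(tau_w ^^ n) [A] = map v_seq [0..<m]"
    by blast
  then have "(tau_w ^^ Suc n) [A] = map v_seq [0..<tau_position m]"
    by (simp add: tau_w_prefix_v_seq)
  moreover have "3 * m \<le> tau_position m"
    using length_tau_w[of "map v_seq [0..<m]"] by (simp add: tau_w_prefix_v_seq)
  ultimately show ?case
    using \<open>n < m\<close> by (intro exI[of _ "tau_position m"]) simp
qed

section \<open>The limit of the iterates of sigma cubed\<close>

lemma sigma_w_pow_append: "(sigma_w ^^ k) (x @ y) = (sigma_w ^^ k) x @ (sigma_w ^^ k) y"
  by (induction k) (simp_all add: sigma_w_def)

lemma sigma_w_pow3_concat_blocks: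
  "(sigma_w ^^ 3) (concat (map block w)) = concat (map block (tau_w w))"
proof (induction w)
  case (Cons a w)
  have "(sigma_w ^^ 3) (block a) = concat (map block (tau a))"
    by (cases a) (simp_all add: sigma_w_def numeral_3_eq_3)
  then show ?case
    using Cons.IH by (simp add: sigma_w_pow_append tau_w_def)
qed (simp add: tau_w_def sigma_w_def numeral_3_eq_3)

lemma sigma_w_pow3_L2s: "(sigma_w ^^ 3) [L2s] = [L2s, L2, L1, L1s, L2s]"
  by (simp add: sigma_w_def numeral_3_eq_3)

fun block_stem :: "nat \<Rightarrow> AB list" where
  "block_stem 0 = []"
| "block_stem (Suc n) = tau_w (block_stem n) @ [A, B]"

lemma sigma_w_pow_L2s: "(sigma_w ^^ (3 * n)) [L2s] = concat (map block (block_stem n)) @ [L2s]"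
proof (induction n)
  case (Suc n)
  have "(sigma_w ^^ (3 * Suc n)) [L2s] = (sigma_w ^^ 3) ((sigma_w ^^ (3 * n)) [L2s])"
    by (simp only: mult_Suc_right funpow_add comp_apply)
  then show ?case
    unfolding Suc.IH by (simp add: sigma_w_pow_append sigma_w_pow3_concat_blocks sigma_w_pow3_L2s)
qed simp

lemma length_block_stem: "n \<le> length (block_stem n)"
proof (induction n)
  case (Suc n)
  then show ?case
    using length_tau_w[of "block_stem n"] by simp
qed simp

lemma block_stem_prefix_v_seq: "block_stem n @ [A] = map v_seq [0..<Suc (length (block_stem n))]"
proof (induction n)
  case 0
  then show ?case
    by (simp add: v_seq_0)
next
  case (Suc n)
  define m where "m = Suc (length (block_stem n))"
  have "map v_seq [0..<tau_position m] = tau_w (block_stem n @ [A])"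
    using tau_w_prefix_v_seq[of m] Suc.IH by (simp add: m_def)
  also have "\<dots> = (block_stem (Suc n) @ [A]) @ [B, A]"
    by (simp add: tau_w_def)
  finally have prefix: "map v_seq [0..<tau_position m] = (block_stem (Suc n) @ [A]) @ [B, A]" .
  define k where "k = Suc (length (block_stem (Suc n)))"
  have "k \<le> tau_position m"
    using arg_cong[OF prefix, of length] by (simp add: k_def)
  then have "map v_seq [0..<k] = take k (map v_seq [0..<tau_position m])"
    by (simp add: take_map)
  also have "\<dots> = block_stem (Suc n) @ [A]"
    unfolding prefix k_def by simp
  finally show ?case
    by (simp add: k_def)
qed

definition u_seq :: "nat \<Rightarrow> letter" where
  "u_seq i = block (v_seq (i div 2)) ! (i mod 2)"

lemma concat_blocks_v_seq: "concat (map (block \<circ> v_seq) [0..<n]) = map u_seq [0..<2 * n]"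
proof (induction n)
  case (Suc n)
  have "block (v_seq n) = [u_seq (2 * n), u_seq (Suc (2 * n))]"
    unfolding u_seq_def by (cases "v_seq n") simp_all
  then show ?case
    using Suc.IH by simp
qed simp

lemma sigma_w_pow_L2s_prefix_u_seq:
  "(sigma_w ^^ (3 * n)) [L2s] = map u_seq [0..<Suc (2 * length (block_stem n))]"
proof -
  define L where "L = length (block_stem n)"
  have "block_stem n = map v_seq [0..<L]" "v_seq L = A"
    using block_stem_prefix_v_seq[of n] unfolding L_def[symmetric] by simp_all
  moreover have "u_seq (2 * L) = L2s"
    using \<open>v_seq L = A\<close> by (simp add: u_seq_def)
  ultimately show ?thesis
    using concat_blocks_v_seq[of L] unfolding sigma_w_pow_L2s L_def[symmetric] by (simp add: comp_def)
qed

lemma count_window_u_seq_L1: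
  "count_window (\<lambda>i. u_seq i = L1) 0 n = count_window (\<lambda>k. v_seq k = B) 0 ((n + 1) div 2)"
proof (induction n)
  case (Suc n)
  show ?case
  proof (cases "even n")
    case True
    then obtain k where "n = 2 * k"
      by blast
    moreover have "u_seq (2 * k) = L1 \<longleftrightarrow> v_seq k = B"
      unfolding u_seq_def by (cases "v_seq k") simp_all
    ultimately show ?thesis
      using Suc.IH by simp
  next
    case False
    then obtain k where "n = 2 * k + 1"
      using oddE by blast
    moreover have "u_seq (2 * k + 1) \<noteq> L1"
      unfolding u_seq_def by (cases "v_seq k") simp_all
    ultimately show ?thesis
      using Suc.IH by simp
  qed
qed simp

lemma u_seq_L1_prefix_balanced:
  "\<bar>of_int (count_window (\<lambda>i. u_seq i = L1) 0 n) - real n * (slope / 2)\<bar> \<le> 1"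
proof -
  define k where "k = (n + 1) div 2"
  have "count_window (\<lambda>i. u_seq i = L1) 0 n = \<lfloor>real k * slope + 1 / 2\<rfloor>"
    using count_window_mechanical[of slope "1 / 2" 0 k] slope_bounds
    unfolding count_window_u_seq_L1 k_def[symmetric] v_seq_def by simp
  moreover have "\<bar>of_int \<lfloor>real k * slope + 1 / 2\<rfloor> - real k * slope\<bar> \<le> 1 / 2"
    by linarith
  moreover have "real k * slope - real n * (slope / 2) = (2 * real k - real n) * (slope / 2)"
    by (simp add: algebra_simps)
  moreover have "0 \<le> (2 * real k - real n) * (slope / 2)" "(2 * real k - real n) * (slope / 2) \<le> 1 * (slope / 2)"
  proof -
    have "n \<le> 2 * k" "2 * k \<le> n + 1"
      unfolding k_def by presburger+
    then have "0 \<le> 2 * real k - real n" "2 * real k - real n \<le> 1"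
      by linarith+
    then show "0 \<le> (2 * real k - real n) * (slope / 2)" "(2 * real k - real n) * (slope / 2) \<le> 1 * (slope / 2)"
      using slope_bounds by (simp_all add: mult_right_mono)
  qed
  ultimately show ?thesis
    using slope_bounds unfolding abs_le_iff by linarith
qed

lemma u_seq_L1_balanced:
  "\<bar>of_int (count_window (\<lambda>i. u_seq i = L1) s m) - real m * (slope / 2)\<bar> \<le> 2"
proof -
  have "count_window (\<lambda>i. u_seq i = L1) 0 (s + m)
      = count_window (\<lambda>i. u_seq i = L1) 0 s + count_window (\<lambda>i. u_seq i = L1) s m"
    using count_window_add[of _ 0 s m] by simp
  moreover have "real (s + m) * (slope / 2) = real s * (slope / 2) + real m * (slope / 2)"
    by (simp add: algebra_simps)
  ultimately show ?thesis
    using u_seq_L1_prefix_balanced[of "s + m"] u_seq_L1_prefix_balanced[of s]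
    unfolding abs_le_iff by linarith
qed

lemma u_seq_not_q_automatic:
  assumes "2 \<le> q"
  shows "\<not> q_automatic q u_seq"
proof
  assume "q_automatic q u_seq"
  then have "slope / 2 \<in> \<rat>"
    using u_seq_L1_balanced by (intro q_automatic_balanced_frequency_rational[OF assms]) auto
  then have "slope / 2 + slope / 2 \<in> \<rat>"
    using Rats_add by blast
  then show False
    using slope_irrational by simp
qed

lemma word_limit_of_prefixes:
  assumes "\<And>n. \<exists>m\<ge>n. ws n = map x [0..<m]"
  shows "word_limit x ws"
  unfolding word_limit_def
proof (intro allI exI[of _ _] impI)
  fix N n :: nat
  assume "N \<le> n"
  obtain m where "n \<le> m" "ws n = map x [0..<m]"
    using assms by blast
  then show "N \<le> length (ws n) \<and> (\<forall>i<N. ws n ! i = x i)"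
    using \<open>N \<le> n\<close> by auto
qed

lemma word_limit_unique:
  assumes "word_limit x ws" "word_limit y ws"
  shows "x = y"
proof
  fix i
  obtain n1 where n1: "\<forall>n\<ge>n1. Suc i \<le> length (ws n) \<and> (\<forall>j<Suc i. ws n ! j = x j)"
    using assms(1) unfolding word_limit_def by blast
  obtain n2 where n2: "\<forall>n\<ge>n2. Suc i \<le> length (ws n) \<and> (\<forall>j<Suc i. ws n ! j = y j)"
    using assms(2) unfolding word_limit_def by blast
  show "x i = y i"
    using n1[rule_format, of "max n1 n2"] n2[rule_format, of "max n1 n2"] by simp
qed

lemma word_limit_u_seq: "word_limit u_seq (\<lambda>n. (sigma_w ^^ (3 * n)) [L2s])"
  using sigma_w_pow_L2s_prefix_u_seq length_block_stem
  by (intro word_limit_of_prefixes) (metis le_SucI mult_2 trans_le_add1)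

lemma word_limit_u_seq_blocks: "word_limit u_seq (\<lambda>n. concat (map (block \<circ> v_seq) [0..<n]))"
  using concat_blocks_v_seq by (intro word_limit_of_prefixes) (metis le_add2 mult_2)

lemma word_limit_v_seq: "word_limit v_seq (\<lambda>n. (tau_w ^^ n) [A])"
  using tau_pow_prefix_v_seq by (intro word_limit_of_prefixes) (meson less_imp_le)

lemma sturmian_v_seq: "sturmian v_seq"
  unfolding v_seq_def using slope_irrational slope_bounds by (intro sturmian_mechanical) simp_all

theorem mainTheorem12:
  shows "(\<exists>w. (sigma_w ^^ 3) [L2s] = L2s # w)
    \<and> (\<exists>u. word_limit u (\<lambda>n. (sigma_w ^^ (3 * n)) [L2s]))
    \<and> (\<forall>u. word_limit u (\<lambda>n. (sigma_w ^^ (3 * n)) [L2s]) \<longrightarrow>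
          (\<forall>q\<ge>2. \<not> q_automatic q u)
        \<and> (\<exists>v. word_limit u (\<lambda>n. concat (map (block \<circ> v) [0..<n]))
               \<and> word_limit v (\<lambda>n. (tau_w ^^ n) [A])
               \<and> sturmian v))"
proof (intro conjI allI impI)
  show "\<exists>w. (sigma_w ^^ 3) [L2s] = L2s # w"
    by (simp add: sigma_w_pow3_L2s)
  show "\<exists>u. word_limit u (\<lambda>n. (sigma_w ^^ (3 * n)) [L2s])"
    using word_limit_u_seq by blast
  fix u
  assume "word_limit u (\<lambda>n. (sigma_w ^^ (3 * n)) [L2s])"
  then have "u = u_seq"
    using word_limit_u_seq by (rule word_limit_unique)
  then show "\<not> q_automatic q u" if "2 \<le> q" for q
    using u_seq_not_q_automatic[OF that] by simp
  show "\<exists>v. word_limit u (\<lambda>n. concat (map (block \<circ> v) [0..<n]))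
      \<and> word_limit v (\<lambda>n. (tau_w ^^ n) [A]) \<and> sturmian v"
    using \<open>u = u_seq\<close> word_limit_u_seq_blocks word_limit_v_seq sturmian_v_seq by blast
qed

end
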